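(* Let $\Omega\subset\mathbb{R}^3$ be a MAC compatible bounded domain, $(\mathcal M,\mathcal E)$ a MAC grid, $\varrho\in L_{\mathcal M}$, $\boldsymbol u=(u_1,u_2,u_3)\in\mathbf H_{\mathcal E,0}$, $i\in\{1,2,3\}$ and $\varphi=(\varphi_\sigma)\in H^{(i)}_{\mathcal E,0}$. With the primal fluxes $F_{K,\sigma}$ and dual fluxes $F_{\sigma,\varepsilon}$ defined from $(\varrho,\boldsymbol u)$ as in the context, $$\sum_{\sigma\in\mathcal E^{(i)}_{\rm int}}\ \sum_{\varepsilon\text{ face of }D_\sigma}F_{\sigma,\varepsilon}u_\varepsilon\varphi_\sigma=\sum_{j=1}^3S_j,$$ where $$S_i=\sum_{K=[\overrightarrow{\sigma\sigma'}],\ \sigma,\sigma'\in\mathcal E^{(i)}}\big(\varrho^{\rm up}_\sigma u_\sigma|D_{K,\sigma}|+\varrho^{\rm up}_{\sigma'}u_{\sigma'}|D_{K,\sigma'}|\big)(\mathcal R^{(i)}_{\mathcal M}u_i)_K\,\frac{\varphi_\sigma-\varphi_{\sigma'}}{d(\boldsymbol x_\sigma,\boldsymbol x_{\sigma'})},$$ and, for $j\neq i$, $$S_j=\sum_{\tau\in\mathcal E^{(j)}_{\rm int}}|D_\tau|\frac{\varrho^{\rm up}_\tau u_\tau}{4}\Big[(u_{\sigma_3}+u_{\sigma_1})\frac{\varphi_{\sigma_3}-\varphi_{\sigma_1}}{d(\boldsymbol x_{\sigma_1},\boldsymbol x_{\sigma_3})}+(u_{\sigma_4}+u_{\sigma_2})\frac{\varphi_{\sigma_4}-\varphi_{\sigma_2}}{d(\boldsymbol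 x_{\sigma_2},\boldsymbol x_{\sigma_4})}\Big],$$ where $\sigma_1,\dots,\sigma_4$ are the four faces of $\mathcal E^{(i)}$ neighbouring $\tau$ (i.e. the faces in $\mathcal E^{(i)}$ of the two cells sharing $\tau$), labelled so that $\boldsymbol x_{\sigma_1}-\boldsymbol x_{\sigma_3}=\boldsymbol x_{\sigma_2}-\boldsymbol x_{\sigma_4}=\beta\boldsymbol e_j$ for some $\beta>0$.
   Context: MAC compatible domain: bounded connected open $\Omega$ whose closure is a finite union of closed rectangular parallelepipeds with faces orthogonal to $\boldsymbol e_1,\boldsymbol e_2,\boldsymbol e_3$. MAC grid $(\mathcal M,\mathcal E)$: structured partition $\mathcal M$ of $\Omega$ into rectangular parallelepipeds $K$; faces $\mathcal E$, $\mathcal E(K)$ the faces of $K$, $\mathcal E^{(i)}$ (resp. $\mathcal E^{(i)}_{\rm int}$) the (interior) faces orthogonal to $\boldsymbol e_i$; $\sigma=K|L$ common face; $\boldsymbol x_\sigma$ face mass centre; $d(\cdot,\cdot)$ Euclidean distance. $K=[\overrightarrow{\sigma\sigma'}]$ means $\sigma,\sigma'\in\mathcal E^{(i)}\cap\mathcal E(K)$ with $(\boldsymbol x_{\sigma'}-\boldsymbol x_\sigma)\cdot\boldsymbol e_i>0$. $D_{K,\sigma}$ is the half of $K$ adjacent to $\sigma$; dual cells $D_\sigma=D_{K,\sigma}\cup D_{L,\sigma}$ for $\sigma=K|L$, $D_{K,\sigma}$ for boundary $\sigma$; dual faces $\varepsilon=\sigma|\sigma'$ separate $D_\sigma,D_{\sigma'}$.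 $L_{\mathcal M}$: piecewise constants on cells (values $\varrho_K$); $H^{(i)}_{\mathcal E,0}$: piecewise constants on $D_\sigma$, $\sigma\in\mathcal E^{(i)}$ (values $u_\sigma$), vanishing for boundary $\sigma$; $\mathbf H_{\mathcal E,0}=\prod_iH^{(i)}_{\mathcal E,0}$; for $\tau\in\mathcal E^{(j)}$, $u_\tau$ denotes the value of $u_j$ on $D_\tau$. Fluxes: $u_{K,\sigma}=u_\sigma\boldsymbol e_i\cdot\boldsymbol n_{K,\sigma}$ for $\sigma\in\mathcal E^{(i)}\cap\mathcal E(K)$; $F_{K,\sigma}=|\sigma|\varrho^{\rm up}_\sigma u_{K,\sigma}$ with $\varrho^{\rm up}_\sigma=\varrho_K$ if $u_{K,\sigma}\ge0$ and $\varrho_L$ otherwise ($\sigma=K|L$), and $F_{K,\sigma}=0$ on boundary faces. Dual fluxes for $\sigma=K|L\in\mathcal E^{(i)}_{\rm int}$: if $\varepsilon=\sigma|\sigma'\subset K$ is orthogonal to $\boldsymbol e_i$ then $F_{\sigma,\varepsilon}=\frac12[F_{K,\sigma}\boldsymbol n_{K,\sigma}+F_{K,\sigma'}\boldsymbol n_{K,\sigma'}]\cdot\boldsymbol n_{D_\sigma,\varepsilon}$; if $\varepsilon$ is orthogonal to $\boldsymbol e_j$, $j\neq i$, and $\varepsilon\subset\tau\cup\tau'$ with $\tau\in\mathcal E(K)$, $\tau'\in\mathcal E(L)$, then $F_{\sigma,\varepsilon}=\frac12(F_{K,\tau}+F_{L,\tau'})$; fluxes through dual faces on $\partial\Omega$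 are zero. $u_\varepsilon=\frac12(u_\sigma+u_{\sigma'})$ for $\varepsilon=\sigma|\sigma'$ interior. $(\mathcal R^{(i)}_{\mathcal M}u_i)_K=\frac12\sum_{\sigma\in\mathcal E^{(i)}\cap\mathcal E(K)}u_\sigma$. *)

theory Defs
  imports "HOL-Analysis.Analysis"
begin

text \<open>Structured MAC grid in R^3: a tensor-product grid with plane coordinates
  g d a (direction d, plane number a, strictly increasing in a); the cell with index
  k :: int^3 is the box [g d (k$d), g d (k$d+1)] in each direction d; C is the (finite)
  set of cells forming the partition M of the MAC compatible domain Omega.
  Directions e_1,e_2,e_3 are indexed by the type 3.
  Face (i,k): the face orthogonal to e_i lying on the plane g i (k$i), shared by the
  cells k - e i (below, in direction i) and k (above).\<close>

definition e :: "3 \<Rightarrow> int^3" where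
  "e d = axis d 1"

definition cell_box :: "(3 \<Rightarrow> int \<Rightarrow> real) \<Rightarrow> int^3 \<Rightarrow> (real^3) set" where
  "cell_box g k = cbox (\<chi> d. g d (k$d)) (\<chi> d. g d (k$d + 1))"

definition MAC_domain :: "(3 \<Rightarrow> int \<Rightarrow> real) \<Rightarrow> (int^3) set \<Rightarrow> (real^3) set" where
  "MAC_domain g C = interior (\<Union>k\<in>C. cell_box g k)"

definition MAC_grid :: "(3 \<Rightarrow> int \<Rightarrow> real) \<Rightarrow> (int^3) set \<Rightarrow> bool" where
  "MAC_grid g C \<longleftrightarrow> (\<forall>d. strict_mono (g d)) \<and> finite C \<and> C \<noteq> {}
      \<and> connected (MAC_domain g C)"

definition is_face :: "(int^3) set \<Rightarrow> 3 \<Rightarrow> int^3 \<Rightarrow> bool" where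
  "is_face C i k \<longleftrightarrow> k \<in> C \<or> k - e i \<in> C"

definition int_face :: "(int^3) set \<Rightarrow> 3 \<Rightarrow> int^3 \<Rightarrow> bool" where
  "int_face C i k \<longleftrightarrow> k \<in> C \<and> k - e i \<in> C"

definition h :: "(3 \<Rightarrow> int \<Rightarrow> real) \<Rightarrow> 3 \<Rightarrow> int^3 \<Rightarrow> real" where
  "h g d k = g d (k$d + 1) - g d (k$d)"

definition cell_vol :: "(3 \<Rightarrow> int \<Rightarrow> real) \<Rightarrow> int^3 \<Rightarrow> real" where
  "cell_vol g k = (\<Prod>d\<in>UNIV. h g d k)"

definition half_vol :: "(3 \<Rightarrow> int \<Rightarrow> real) \<Rightarrow> int^3 \<Rightarrow> real" where
  "half_vol g K = cell_vol g K / 2"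

definition dual_vol :: "(3 \<Rightarrow> int \<Rightarrow> real) \<Rightarrow> 3 \<Rightarrow> int^3 \<Rightarrow> real" where
  "dual_vol g i k = half_vol g (k - e i) + half_vol g k"

definition face_area :: "(3 \<Rightarrow> int \<Rightarrow> real) \<Rightarrow> 3 \<Rightarrow> int^3 \<Rightarrow> real" where
  "face_area g i k = (\<Prod>d\<in>UNIV - {i}. h g d k)"

definition face_centre :: "(3 \<Rightarrow> int \<Rightarrow> real) \<Rightarrow> 3 \<Rightarrow> int^3 \<Rightarrow> real^3" where
  "face_centre g i k = (\<chi> d. if d = i then g i (k$i) else (g d (k$d) + g d (k$d + 1)) / 2)"

text \<open>Outward unit normal n_{K,sigma} of cell K on its face (i,k) (k = K: lower face,
  k = K + e i: upper face), and the other cell L with sigma = K|L.\<close>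
definition cell_normal :: "3 \<Rightarrow> int^3 \<Rightarrow> int^3 \<Rightarrow> real^3" where
  "cell_normal i K k = (if k = K then - axis i 1 else axis i 1)"

definition other_cell :: "3 \<Rightarrow> int^3 \<Rightarrow> int^3 \<Rightarrow> int^3" where
  "other_cell i K k = (if k = K then K - e i else K + e i)"

text \<open>u_{K,sigma} = u_sigma e_i . n_{K,sigma}; u i k is the value of u_i on D_sigma, sigma=(i,k).\<close>
definition u_K :: "(3 \<Rightarrow> int^3 \<Rightarrow> real) \<Rightarrow> 3 \<Rightarrow> int^3 \<Rightarrow> int^3 \<Rightarrow> real" where
  "u_K u i K k = u i k * (axis i 1 \<bullet> cell_normal i K k)"

definition primal_flux :: "(3 \<Rightarrow> int \<Rightarrow> real) \<Rightarrow> (int^3) set \<Rightarrow> (int^3 \<Rightarrow> real)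
    \<Rightarrow> (3 \<Rightarrow> int^3 \<Rightarrow> real) \<Rightarrow> 3 \<Rightarrow> int^3 \<Rightarrow> int^3 \<Rightarrow> real" where
  "primal_flux g C \<rho> u i K k =
     (if int_face C i k then
        face_area g i k * (if u_K u i K k \<ge> 0 then \<rho> K else \<rho> (other_cell i K k)) * u_K u i K k
      else 0)"

text \<open>The face of cell M orthogonal to e_j with outward normal s e_j (s = -1 or 1).\<close>
definition side_face :: "3 \<Rightarrow> int^3 \<Rightarrow> int \<Rightarrow> int^3" where
  "side_face j M s = (if s = -1 then M else M + e j)"

text \<open>Dual faces of D_sigma, sigma = (i,k) interior (sigma = K|L, K = k - e i, L = k), are
  indexed by (j,s), s in {-1,1}: the face of D_sigma orthogonal to e_j with outward normal
  n_{D_sigma,eps} = s e_j.  Its neighbour sigma' (eps = sigma|sigma') is (i, side k).\<close>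
definition dual_nb :: "3 \<Rightarrow> int^3 \<Rightarrow> int \<Rightarrow> int^3" where
  "dual_nb j k s = (if s = -1 then k - e j else k + e j)"

definition dual_flux :: "(3 \<Rightarrow> int \<Rightarrow> real) \<Rightarrow> (int^3) set \<Rightarrow> (int^3 \<Rightarrow> real)
    \<Rightarrow> (3 \<Rightarrow> int^3 \<Rightarrow> real) \<Rightarrow> 3 \<Rightarrow> int^3 \<Rightarrow> 3 \<Rightarrow> int \<Rightarrow> real" where
  "dual_flux g C \<rho> u i k j s =
     (let K = k - e i; L = k; n\<epsilon> = real_of_int s *\<^sub>R axis j (1::real) in
      if j = i then
        (let M = (if s = -1 then K else L); k' = dual_nb i k s in
          ((1/2) *\<^sub>R (primal_flux g C \<rho> u i M k *\<^sub>R cell_normal i M k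
                     + primal_flux g C \<rho> u i M k' *\<^sub>R cell_normal i M k')) \<bullet> n\<epsilon>)
      else
        (let \<tau> = side_face j K s; \<tau>' = side_face j L s in
          if \<not> int_face C j \<tau> \<and> \<not> int_face C j \<tau>' then 0
          else (primal_flux g C \<rho> u j K \<tau> + primal_flux g C \<rho> u j L \<tau>') / 2))"

definition dual_u :: "(3 \<Rightarrow> int^3 \<Rightarrow> real) \<Rightarrow> 3 \<Rightarrow> int^3 \<Rightarrow> 3 \<Rightarrow> int \<Rightarrow> real" where
  "dual_u u i k j s = (u i k + u i (dual_nb j k s)) / 2"

definition conv_lhs :: "(3 \<Rightarrow> int \<Rightarrow> real) \<Rightarrow> (int^3) set \<Rightarrow> (int^3 \<Rightarrow> real)
    \<Rightarrow> (3 \<Rightarrow> int^3 \<Rightarrow> real) \<Rightarrow> 3 \<Rightarrow> (int^3 \<Rightarrow> real) \<Rightarrow> real" where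
  "conv_lhs g C \<rho> u i \<phi> =
     (\<Sum>k\<in>{k. int_face C i k}. \<Sum>j\<in>UNIV. \<Sum>s\<in>{-1, 1::int}.
        dual_flux g C \<rho> u i k j s * dual_u u i k j s * \<phi> k)"

definition rho_up :: "(int^3 \<Rightarrow> real) \<Rightarrow> (3 \<Rightarrow> int^3 \<Rightarrow> real) \<Rightarrow> 3 \<Rightarrow> int^3 \<Rightarrow> real" where
  "rho_up \<rho> u i k = (if u i k \<ge> 0 then \<rho> (k - e i) else \<rho> k)"

definition reconstr :: "(3 \<Rightarrow> int^3 \<Rightarrow> real) \<Rightarrow> 3 \<Rightarrow> int^3 \<Rightarrow> real" where
  "reconstr u i K = (u i K + u i (K + e i)) / 2"

text \<open>For j \<noteq> i: tau = (j,k), the cells sharing tau are K = k - e j (below) and L = k (above);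
  sigma_1 = (i,L), sigma_2 = (i,L+e i), sigma_3 = (i,K), sigma_4 = (i,K+e i), so that
  x_sigma1 - x_sigma3 = x_sigma2 - x_sigma4 = beta e_j with beta > 0.\<close>
definition S_term :: "(3 \<Rightarrow> int \<Rightarrow> real) \<Rightarrow> (int^3) set \<Rightarrow> (int^3 \<Rightarrow> real)
    \<Rightarrow> (3 \<Rightarrow> int^3 \<Rightarrow> real) \<Rightarrow> 3 \<Rightarrow> (int^3 \<Rightarrow> real) \<Rightarrow> 3 \<Rightarrow> real" where
  "S_term g C \<rho> u i \<phi> j =
    (if j = i then
       (\<Sum>K\<in>C. let \<sigma> = K; \<sigma>' = K + e i in
          (rho_up \<rho> u i \<sigma> * u i \<sigma> * half_vol g K + rho_up \<rho> u i \<sigma>' * u i \<sigma>' * half_vol g K)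
          * reconstr u i K
          * (\<phi> \<sigma> - \<phi> \<sigma>') / dist (face_centre g i \<sigma>) (face_centre g i \<sigma>'))
     else
       (\<Sum>k\<in>{k. int_face C j k}. let L = k; K = k - e j;
          \<sigma>1 = L; \<sigma>2 = L + e i; \<sigma>3 = K; \<sigma>4 = K + e i in
          dual_vol g j k * (rho_up \<rho> u j k * u j k / 4)
          * ((u i \<sigma>3 + u i \<sigma>1) * (\<phi> \<sigma>3 - \<phi> \<sigma>1) / dist (face_centre g i \<sigma>1) (face_centre g i \<sigma>3)
           + (u i \<sigma>4 + u i \<sigma>2) * (\<phi> \<sigma>4 - \<phi> \<sigma>2) / dist (face_centre g i \<sigma>2) (face_centre g i \<sigma>4))))"

end

theory Submission
  imports Defs
begin

text \<open>Up to the sign of the outward normal, every primal flux through a face \<open>\<tau> \<in> \<E>\<^sup>(\<^sup>j\<^sup>)\<close>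
  equals \<open>|\<tau>| \<rho>\<^sup>u\<^sup>p\<^sub>\<tau> u\<^sub>\<tau>\<close> (on boundary faces because \<open>u\<close> vanishes there). Expanding the dual
  fluxes in these numbers turns the left-hand side, for each direction \<open>j\<close> of the dual faces,
  into a sum over \<open>\<sigma>\<close> of differences of lattice translates times \<open>\<phi>\<^sub>\<sigma>\<close>. Summation by parts on
  \<open>\<int>\<^sup>3\<close> moves the translations onto \<open>\<phi>\<close> and produces the differences of \<open>\<phi>\<close> in \<open>S\<^sub>j\<close>: along
  \<open>e\<^sub>i\<close> for \<open>j = i\<close>, and along \<open>e\<^sub>j\<close> on the two \<open>e\<^sub>i\<close>-faces next to \<open>\<tau>\<close> for \<open>j \<noteq> i\<close>. The
  volumes in \<open>S\<^sub>j\<close> are face areas times the corresponding distances of face centres.\<close>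

lemma sum_translate_eq:
  fixes f :: "'a::ab_group_add \<Rightarrow> 'b::comm_monoid_add"
  assumes "finite A" "finite B"
    and "\<And>x. x \<notin> A \<Longrightarrow> f (x + c) = 0" and "\<And>y. y \<notin> B \<Longrightarrow> f y = 0"
  shows "(\<Sum>x\<in>A. f (x + c)) = (\<Sum>y\<in>B. f y)"
proof -
  have "(\<Sum>x\<in>A. f (x + c)) = (\<Sum>y\<in>(\<lambda>x. x + c) ` A. f y)"
    by (simp add: sum.reindex inj_on_def)
  also have "\<dots> = (\<Sum>y\<in>(\<lambda>x. x + c) ` A \<union> B. f y)"
    using assms by (intro sum.mono_neutral_left) (auto simp: image_iff, metis diff_add_cancel)
  also have "\<dots> = (\<Sum>y\<in>B. f y)"
    using assms by (intro sum.mono_neutral_right) auto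
  finally show ?thesis .
qed

lemma sum_by_parts_translate:
  fixes P \<phi> :: "'a::ab_group_add \<Rightarrow> 'b::comm_ring"
  assumes "finite A" "finite B" and "\<And>x. x \<notin> A \<Longrightarrow> \<phi> x = 0"
    and "\<And>y. y \<notin> B \<Longrightarrow> P y * \<phi> (y - c) = 0" "\<And>y. y \<notin> B \<Longrightarrow> P y * \<phi> (y - c + d) = 0"
  shows "(\<Sum>x\<in>A. (P (x + c) - P (x + (c - d))) * \<phi> x)
       = (\<Sum>y\<in>B. P y * (\<phi> (y - c) - \<phi> (y - c + d)))"
proof -
  have "(\<Sum>x\<in>A. P (x + c) * \<phi> x) = (\<Sum>y\<in>B. P y * \<phi> (y - c))"
    using sum_translate_eq[of A B "\<lambda>y. P y * \<phi> (y - c)" c] assms by simp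
  moreover have "(\<Sum>x\<in>A. P (x + (c - d)) * \<phi> x) = (\<Sum>y\<in>B. P y * \<phi> (y - c + d))"
    using sum_translate_eq[of A B "\<lambda>y. P y * \<phi> (y - c + d)" "c - d"] assms
    by (simp add: algebra_simps)
  ultimately show ?thesis
    by (simp add: left_diff_distrib right_diff_distrib sum_subtractf)
qed

lemma dist_vec_eq_abs_nth:
  fixes x y :: "real^'n"
  assumes "\<And>d. d \<noteq> j \<Longrightarrow> x$d = y$d"
  shows "dist x y = \<bar>x$j - y$j\<bar>"
proof -
  have "x - y = (x$j - y$j) *\<^sub>R axis j 1"
    using assms by (auto simp: vec_eq_iff axis_def)
  then show ?thesis by (simp add: dist_norm)
qed

lemma e_nth [simp]: "e j $ d = (if d = j then 1 else 0)"
  by (simp add: e_def axis_def)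

lemma e_neq_zero [simp]: "e j \<noteq> 0"
  by (metis e_nth zero_index zero_neq_one)

lemma finite_int_face: "finite C \<Longrightarrow> finite {k. int_face C j k}"
  by (rule finite_subset[of _ C]) (auto simp: int_face_def)

lemma h_pos: "strict_mono (g d) \<Longrightarrow> h g d k > 0"
  by (simp add: h_def strict_mono_def)

lemma face_area_translate:
  "face_area g j (k + e j) = face_area g j k" "face_area g j (k - e j) = face_area g j k"
  unfolding face_area_def h_def by (rule prod.cong; simp)+

lemma cell_vol_eq_h_mult_face_area: "cell_vol g k = h g j k * face_area g j k"
  unfolding cell_vol_def face_area_def by (rule prod.remove) auto

lemma dual_vol_eq_face_area_mult:
  "dual_vol g j k = face_area g j k * ((h g j (k - e j) + h g j k) / 2)"
  by (simp add: dual_vol_def half_vol_def cell_vol_eq_h_mult_face_area[of g _ j]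
      face_area_translate field_simps)

lemma dist_face_centre_normal:
  "strict_mono (g i) \<Longrightarrow> dist (face_centre g i k) (face_centre g i (k + e i)) = h g i k"
  using h_pos[of g i k]
  by (subst dist_vec_eq_abs_nth[where j = i]) (auto simp: face_centre_def h_def)

lemma dist_face_centre_tangential:
  assumes "strict_mono (g j)" "j \<noteq> i" "a $ j = 0"
  shows "dist (face_centre g i (k + a)) (face_centre g i (k - e j + a))
       = (h g j (k - e j) + h g j k) / 2"
  using assms h_pos[of g j k] h_pos[of g j "k - e j"]
  by (subst dist_vec_eq_abs_nth[where j = j]) (auto simp: face_centre_def h_def field_simps)

definition upwind_mass_flux ::
    "(3 \<Rightarrow> int \<Rightarrow> real) \<Rightarrow> (int^3 \<Rightarrow> real) \<Rightarrow> (3 \<Rightarrow> int^3 \<Rightarrow> real) \<Rightarrow> 3 \<Rightarrow> int^3 \<Rightarrow> real" where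
  "upwind_mass_flux g \<rho> u j t = face_area g j t * rho_up \<rho> u j t * u j t"

lemma upwind_mass_flux_boundary:
  "\<not> int_face C j t \<Longrightarrow> \<forall>j k. \<not> int_face C j k \<longrightarrow> u j k = 0 \<Longrightarrow> upwind_mass_flux g \<rho> u j t = 0"
  by (simp add: upwind_mass_flux_def)

lemma primal_flux_lower_cell:
  assumes "\<forall>j k. \<not> int_face C j k \<longrightarrow> u j k = 0"
  shows "primal_flux g C \<rho> u j (t - e j) t = upwind_mass_flux g \<rho> u j t"
  using assms
  by (auto simp: primal_flux_def upwind_mass_flux_def u_K_def cell_normal_def other_cell_def
      rho_up_def inner_axis_axis)

lemma primal_flux_upper_cell:
  assumes "\<forall>j k. \<not> int_face C j k \<longrightarrow> u j k = 0"
  shows "primal_flux g C \<rho> u j t t = - upwind_mass_flux g \<rho> u j t"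
  using assms
  by (auto simp: primal_flux_def upwind_mass_flux_def u_K_def cell_normal_def other_cell_def
      rho_up_def inner_axis_axis)

lemma dual_flux_normal:
  assumes "\<forall>j k. \<not> int_face C j k \<longrightarrow> u j k = 0"
  shows "dual_flux g C \<rho> u i k i 1
           = (upwind_mass_flux g \<rho> u i k + upwind_mass_flux g \<rho> u i (k + e i)) / 2"
    and "dual_flux g C \<rho> u i k i (-1)
           = - (upwind_mass_flux g \<rho> u i (k - e i) + upwind_mass_flux g \<rho> u i k) / 2"
  using primal_flux_lower_cell[OF assms, of g \<rho> i "k + e i"]
    primal_flux_lower_cell[OF assms, of g \<rho> i k] primal_flux_upper_cell[OF assms]
  by (simp_all add: dual_flux_def dual_nb_def cell_normal_def Let_def inner_axis_axis
      inner_add_left algebra_simps)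

lemma dual_flux_tangential:
  assumes "\<forall>j k. \<not> int_face C j k \<longrightarrow> u j k = 0" and "j \<noteq> i"
  shows "dual_flux g C \<rho> u i k j 1
           = (upwind_mass_flux g \<rho> u j (k - e i + e j) + upwind_mass_flux g \<rho> u j (k + e j)) / 2"
    and "dual_flux g C \<rho> u i k j (-1)
           = - (upwind_mass_flux g \<rho> u j (k - e i) + upwind_mass_flux g \<rho> u j k) / 2"
  using assms primal_flux_lower_cell[OF assms(1), of g \<rho> j "k - e i + e j"]
    primal_flux_lower_cell[OF assms(1), of g \<rho> j "k + e j"] primal_flux_upper_cell[OF assms(1)]
    upwind_mass_flux_boundary[OF _ assms(1)]
  by (auto simp: dual_flux_def side_face_def Let_def)

definition conv_dir :: "(3 \<Rightarrow> int \<Rightarrow> real) \<Rightarrow> (int^3) set \<Rightarrow> (int^3 \<Rightarrow> real)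
    \<Rightarrow> (3 \<Rightarrow> int^3 \<Rightarrow> real) \<Rightarrow> 3 \<Rightarrow> (int^3 \<Rightarrow> real) \<Rightarrow> 3 \<Rightarrow> real" where
  "conv_dir g C \<rho> u i \<phi> j =
     (\<Sum>k\<in>{k. int_face C i k}. \<Sum>s\<in>{-1, 1::int}.
        dual_flux g C \<rho> u i k j s * dual_u u i k j s * \<phi> k)"

lemma conv_lhs_eq_sum_conv_dir: "conv_lhs g C \<rho> u i \<phi> = (\<Sum>j\<in>UNIV. conv_dir g C \<rho> u i \<phi> j)"
  unfolding conv_lhs_def conv_dir_def by (rule sum.swap)

lemma conv_dir_normal:
  assumes grid: "MAC_grid g C"
    and u0: "\<forall>j k. \<not> int_face C j k \<longrightarrow> u j k = 0"
    and \<phi>0: "\<forall>k. \<not> int_face C i k \<longrightarrow> \<phi> k = 0"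
  shows "conv_dir g C \<rho> u i \<phi> i = S_term g C \<rho> u i \<phi> i"
proof -
  have "finite C" and mono: "strict_mono (g i)" using grid by (auto simp: MAC_grid_def)
  define P where "P k = (upwind_mass_flux g \<rho> u i k + upwind_mass_flux g \<rho> u i (k + e i)) / 2
                        * reconstr u i k" for k
  have "conv_dir g C \<rho> u i \<phi> i = (\<Sum>k\<in>{k. int_face C i k}. (P (k + 0) - P (k + (0 - e i))) * \<phi> k)"
    unfolding conv_dir_def
    by (intro sum.cong) (simp_all add: dual_flux_normal[OF u0] P_def dual_u_def dual_nb_def
        reconstr_def field_simps)
  also have "\<dots> = (\<Sum>K\<in>C. P K * (\<phi> (K - 0) - \<phi> (K - 0 + e i)))"
    using \<phi>0 \<open>finite C\<close> finite_int_face
    by (intro sum_by_parts_translate) (auto simp: int_face_def)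
  also have "\<dots> = S_term g C \<rho> u i \<phi> i"
    unfolding S_term_def Let_def if_P[OF refl]
    by (intro sum.cong)
       (simp_all add: h_pos[of g i, OF mono, THEN less_imp_neq, symmetric]
         dist_face_centre_normal[of g i, OF mono] half_vol_def cell_vol_eq_h_mult_face_area[of g _ i]
         P_def upwind_mass_flux_def face_area_translate field_simps)
  finally show ?thesis .
qed

lemma conv_dir_tangential:
  assumes grid: "MAC_grid g C"
    and u0: "\<forall>j k. \<not> int_face C j k \<longrightarrow> u j k = 0"
    and \<phi>0: "\<forall>k. \<not> int_face C i k \<longrightarrow> \<phi> k = 0"
    and "j \<noteq> i"
  shows "conv_dir g C \<rho> u i \<phi> j = S_term g C \<rho> u i \<phi> j"
proof -
  have "finite C" and mono: "strict_mono (g j)" using grid by (auto simp: MAC_grid_def)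
  define I where "I = {k. int_face C i k}"
  define J where "J = {k. int_face C j k}"
  define E where "E a t = upwind_mass_flux g \<rho> u j t / 4 * (u i (t - e j + a) + u i (t + a))" for a t
  have by_parts: "(\<Sum>x\<in>I. (E a (x + (e j - a)) - E a (x + (e j - a - e j))) * \<phi> x)
      = (\<Sum>t\<in>J. E a t * (\<phi> (t - (e j - a)) - \<phi> (t - (e j - a) + e j)))" for a
    using \<phi>0 \<open>finite C\<close> finite_int_face upwind_mass_flux_boundary[OF _ u0]
    by (intro sum_by_parts_translate) (auto simp: I_def J_def E_def)
  have "conv_dir g C \<rho> u i \<phi> j
      = (\<Sum>x\<in>I. (E 0 (x + (e j - 0)) - E 0 (x + (e j - 0 - e j))) * \<phi> x)
      + (\<Sum>x\<in>I. (E (e i) (x + (e j - e i)) - E (e i) (x + (e j - e i - e j))) * \<phi> x)"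
    unfolding conv_dir_def I_def sum.distrib[symmetric]
    by (intro sum.cong)
       (simp_all add: dual_flux_tangential[OF u0 \<open>j \<noteq> i\<close>] E_def dual_u_def dual_nb_def
         field_simps)
  also have "\<dots> = (\<Sum>t\<in>J. E 0 t * (\<phi> (t - e j) - \<phi> t) + E (e i) t * (\<phi> (t - e j + e i) - \<phi> (t + e i)))"
    unfolding by_parts sum.distrib[symmetric] by (intro sum.cong) (simp_all add: algebra_simps)
  also have "\<dots> = S_term g C \<rho> u i \<phi> j"
    unfolding S_term_def Let_def if_not_P[OF \<open>j \<noteq> i\<close>] J_def[symmetric]
  proof (intro sum.cong)
    fix k
    define D where "D = (h g j (k - e j) + h g j k) / 2"
    have "D \<noteq> 0"
      using h_pos[of g j, OF mono] by (simp add: D_def add_pos_pos less_imp_neq[symmetric])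
    have dist_lower: "dist (face_centre g i k) (face_centre g i (k - e j)) = D"
      and dist_upper: "dist (face_centre g i (k + e i)) (face_centre g i (k - e j + e i)) = D"
      unfolding D_def using dist_face_centre_tangential[of g j i 0 k, OF mono \<open>j \<noteq> i\<close>]
        dist_face_centre_tangential[of g j i "e i" k, OF mono \<open>j \<noteq> i\<close>] \<open>j \<noteq> i\<close> by auto
    show "E 0 k * (\<phi> (k - e j) - \<phi> k) + E (e i) k * (\<phi> (k - e j + e i) - \<phi> (k + e i))
      = dual_vol g j k * (rho_up \<rho> u j k * u j k / 4)
        * ((u i (k - e j) + u i k) * (\<phi> (k - e j) - \<phi> k)
             / dist (face_centre g i k) (face_centre g i (k - e j))
           + (u i (k - e j + e i) + u i (k + e i)) * (\<phi> (k - e j + e i) - \<phi> (k + e i))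
             / dist (face_centre g i (k + e i)) (face_centre g i (k - e j + e i)))"
      unfolding dist_lower dist_upper dual_vol_eq_face_area_mult D_def[symmetric]
      using \<open>D \<noteq> 0\<close> by (simp add: E_def upwind_mass_flux_def field_simps)
  qed simp
  finally show ?thesis .
qed

theorem lemma7p3:
  fixes g :: "3 \<Rightarrow> int \<Rightarrow> real" and C :: "(int^3) set" and \<rho> :: "int^3 \<Rightarrow> real"
    and u :: "3 \<Rightarrow> int^3 \<Rightarrow> real" and i :: 3 and \<phi> :: "int^3 \<Rightarrow> real"
  assumes "MAC_grid g C"
    and "\<forall>j k. \<not> int_face C j k \<longrightarrow> u j k = 0"
    and "\<forall>k. \<not> int_face C i k \<longrightarrow> \<phi> k = 0"
  shows "conv_lhs g C \<rho> u i \<phi> = (\<Sum>j\<in>UNIV. S_term g C \<rho> u i \<phi> j)"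
  unfolding conv_lhs_eq_sum_conv_dir
proof (rule sum.cong)
  fix j
  show "conv_dir g C \<rho> u i \<phi> j = S_term g C \<rho> u i \<phi> j"
    by (cases "j = i") (use conv_dir_normal[OF assms] conv_dir_tangential[OF assms] in auto)
qed simp

end
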